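(* Let $N\ge2$ be even and let $\mathcal M=(M_{ij})_{1\le i<j\le N}$ be a family of $\binom N2$ real symmetric $2\times2$ matrices such that $Y=\Psi(\mathcal M)\in SDD_N$ and $\phi_{SDD}(\mathcal M)$ is finite. Then there exist $N-1$ matrices $Z_1,\dots,Z_{N-1}\succ0$ such that $Y=\sum_{k=1}^{N-1}Z_k$ and $\phi_{SDD}(\mathcal M)=\sum_{k=1}^{N-1}\log\det Z_k$.
   Context: $\Psi(\mathcal M)=\sum_{i<j}\Psi_{ij}(M_{ij})$, where $\Psi_{ij}(M)$ is the $N\times N$ matrix with entries $(i,i),(i,j),(j,i),(j,j)$ equal to $M(1,1),M(1,2),M(2,1),M(2,2)$ and zeros elsewhere. $\phi_{SDD}(\mathcal M)=\sum_{i<j}\log\big(M_{ij}(1,1)M_{ij}(2,2)-M_{ij}(1,2)^2\big)$, which is finite exactly when every $M_{ij}\succ0$. $SDD_N$: matrices $DYD$ with $D$ positive diagonal and $Y$ diagonally dominant ($Y(i,i)\ge\sum_{j\ne i}|Y(i,j)|$ for all $i$). *)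

theory Defs
  imports Complex_Main "Jordan_Normal_Form.Determinant"
begin

text \<open>Real matrices are JNF matrices; indices are 0-based, so the paper's index i
  in 1..N corresponds to i-1, and entry M(1,2) of a 2x2 matrix is M $$ (0,1).\<close>

definition pd_mat :: "nat \<Rightarrow> real mat \<Rightarrow> bool" where
  "pd_mat n Z \<longleftrightarrow> Z \<in> carrier_mat n n \<and> transpose_mat Z = Z \<and>
     (\<forall>x \<in> carrier_vec n. x \<noteq> 0\<^sub>v n \<longrightarrow> x \<bullet> (Z *\<^sub>v x) > 0)"

definition pairs :: "nat \<Rightarrow> (nat \<times> nat) set" where
  "pairs N = {(i, j). i < j \<and> j < N}"

definition Psi_ij :: "nat \<Rightarrow> nat \<Rightarrow> nat \<Rightarrow> real mat \<Rightarrow> real mat" where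
  "Psi_ij N i j M = mat N N (\<lambda>(a, b).
      if a = i \<and> b = i then M $$ (0,0)
      else if a = i \<and> b = j then M $$ (0,1)
      else if a = j \<and> b = i then M $$ (1,0)
      else if a = j \<and> b = j then M $$ (1,1)
      else 0)"

definition Psi :: "nat \<Rightarrow> (nat \<Rightarrow> nat \<Rightarrow> real mat) \<Rightarrow> real mat" where
  "Psi N M = mat N N (\<lambda>(a, b). \<Sum>(i, j) \<in> pairs N. Psi_ij N i j (M i j) $$ (a, b))"

definition phi_SDD :: "nat \<Rightarrow> (nat \<Rightarrow> nat \<Rightarrow> real mat) \<Rightarrow> real" where
  "phi_SDD N M = (\<Sum>(i, j) \<in> pairs N.
      ln (M i j $$ (0,0) * M i j $$ (1,1) - (M i j $$ (0,1))^2))"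

definition diag_dominant :: "nat \<Rightarrow> real mat \<Rightarrow> bool" where
  "diag_dominant N Y \<longleftrightarrow> Y \<in> carrier_mat N N \<and>
     (\<forall>i < N. Y $$ (i,i) \<ge> (\<Sum>j \<in> {0..<N} - {i}. \<bar>Y $$ (i,j)\<bar>))"

definition SDD :: "nat \<Rightarrow> real mat set" where
  "SDD N = {D * Y * D | D Y. D \<in> carrier_mat N N \<and> diagonal_mat D \<and>
      (\<forall>i < N. D $$ (i,i) > 0) \<and> diag_dominant N Y}"

end

(* For even N = n + 1 the complete graph on N vertices is the edge-disjoint union of n perfect
   matchings (the round-robin tournament). Let Z_k be the sum of the terms Psi_ij(M_ij) of Psi(M)
   over the edges ij of the k-th matching, so that Psi(M) = Z_1 + ... + Z_n. Since the edges of a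
   matching are disjoint, Z_k is, up to a permutation of the coordinates, block diagonal with the
   positive definite 2x2 blocks M_ij. Hence Z_k is positive definite, det Z_k is the product of the
   det M_ij over the k-th matching, and summing the logarithms over k gives phi_SDD(M). *)

theory Submission
  imports Defs "HOL-Number_Theory.Cong"
begin

section \<open>Positive definite 2x2 matrices\<close>

lemma det_2:
  fixes X :: "'a::comm_ring_1 mat"
  assumes X: "X \<in> carrier_mat 2 2"
  shows "det X = X $$ (0,0) * X $$ (1,1) - X $$ (0,1) * X $$ (1,0)"
proof -
  have minor: "det (mat_delete X 0 j) = X $$ (1, 1 - j)" if "j < 2" for j
    using that X by (subst det_single) (auto simp: mat_delete_def mat_delete_carrier)
  show ?thesis
    using X by (simp add: laplace_expansion_row[OF X, of 0] cofactor_def minor numeral_2_eq_2)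
qed

definition quad_form_2 :: "'a::comm_ring mat \<Rightarrow> 'a \<Rightarrow> 'a \<Rightarrow> 'a" where
  "quad_form_2 X u v = u * (X $$ (0,0) * u + X $$ (0,1) * v) + v * (X $$ (1,0) * u + X $$ (1,1) * v)"

lemma quad_form_2_scalar_prod:
  assumes "X \<in> carrier_mat 2 2"
  shows "vec 2 (\<lambda>i. if i = 0 then u else v) \<bullet> (X *\<^sub>v vec 2 (\<lambda>i. if i = 0 then u else v)) =
    quad_form_2 X u v"
proof -
  have sum_2: "(\<Sum>i\<in>{0..<2::nat}. f i) = f 0 + f 1" for f :: "nat \<Rightarrow> 'a"
    by (simp add: numeral_2_eq_2)
  show ?thesis
    using assms by (simp add: quad_form_2_def scalar_prod_def sum_2)
qed

lemma pd_mat_2_quad_form_pos: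
  assumes "pd_mat 2 X" and "u \<noteq> 0 \<or> v \<noteq> 0"
  shows "quad_form_2 X u v > 0"
proof -
  let ?w = "vec 2 (\<lambda>i. if i = 0 then u else v)"
  have "?w \<noteq> 0\<^sub>v 2"
  proof
    assume "?w = 0\<^sub>v 2"
    then have "?w $ 0 = 0" and "?w $ 1 = 0"
      by simp_all
    with assms(2) show False
      by simp
  qed
  then show ?thesis
    using assms(1) quad_form_2_scalar_prod[of X u v] unfolding pd_mat_def by auto
qed

lemma pd_mat_2_quad_form_nonneg:
  assumes "pd_mat 2 X"
  shows "quad_form_2 X u v \<ge> 0"
  using pd_mat_2_quad_form_pos[OF assms, of u v] by (cases "u = 0 \<and> v = 0") (auto simp: quad_form_2_def)

lemma pd_mat_2_symmetric:
  assumes "pd_mat 2 X"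
  shows "X $$ (1,0) = X $$ (0,1)"
proof -
  have X: "X \<in> carrier_mat 2 2" and "transpose_mat X = X"
    using assms unfolding pd_mat_def by auto
  then have "X $$ (1,0) = transpose_mat X $$ (1,0)"
    by simp
  also have "\<dots> = X $$ (0,1)"
    using X by auto
  finally show ?thesis .
qed

lemma pd_mat_2_diag_pos:
  assumes "pd_mat 2 X"
  shows "X $$ (0,0) > 0" and "X $$ (1,1) > 0"
  using pd_mat_2_quad_form_pos[OF assms, of 1 0] pd_mat_2_quad_form_pos[OF assms, of 0 1]
  by (simp_all add: quad_form_2_def)

lemma pd_mat_2_det:
  assumes "pd_mat 2 X"
  shows "det X = X $$ (0,0) * X $$ (1,1) - (X $$ (0,1))\<^sup>2"
  using assms det_2[of X] pd_mat_2_symmetric[OF assms] by (simp add: pd_mat_def power2_eq_square)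

lemma pd_mat_2_det_pos:
  assumes "pd_mat 2 X"
  shows "det X > 0"
proof -
  have "quad_form_2 X (- X $$ (0,1)) (X $$ (0,0)) > 0"
    using pd_mat_2_quad_form_pos[OF assms] pd_mat_2_diag_pos[OF assms] by simp
  then have "X $$ (0,0) * det X > 0"
    using pd_mat_2_symmetric[OF assms]
    by (simp add: pd_mat_2_det[OF assms] quad_form_2_def algebra_simps power2_eq_square)
  then show ?thesis
    using pd_mat_2_diag_pos(1)[OF assms] by (simp add: zero_less_mult_iff)
qed

section \<open>Perfect matchings of the complete graph\<close>

(* A perfect matching is represented by the involution sending each vertex to its partner. *)
definition perfect_matching :: "nat \<Rightarrow> (nat \<Rightarrow> nat) \<Rightarrow> bool" where
  "perfect_matching N m \<longleftrightarrow> (\<forall>a<N. m a < N \<and> m a \<noteq> a \<and> m (m a) = a)"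

definition lower_ends :: "nat \<Rightarrow> (nat \<Rightarrow> nat) \<Rightarrow> nat set" where
  "lower_ends N m = {a. a < N \<and> a < m a}"

definition matching_edges :: "nat \<Rightarrow> (nat \<Rightarrow> nat) \<Rightarrow> (nat \<times> nat) set" where
  "matching_edges N m = {(i, j) \<in> pairs N. m i = j}"

lemma finite_pairs: "finite (pairs N)"
  by (rule finite_subset[of _ "{0..<N} \<times> {0..<N}"]) (auto simp: pairs_def)

lemma finite_matching_edges: "finite (matching_edges N m)"
  by (rule finite_subset[OF _ finite_pairs]) (auto simp: matching_edges_def)

lemma finite_lower_ends: "finite (lower_ends N m)"
  by (simp add: lower_ends_def)

lemma perfect_matchingD:
  assumes "perfect_matching N m" and "a < N"
  shows "m a < N" and "m a \<noteq> a" and "m (m a) = a"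
  using assms unfolding perfect_matching_def by auto

lemma perfect_matching_partition:
  assumes "perfect_matching N m"
  shows "{0..<N} = lower_ends N m \<union> m ` lower_ends N m"
    and "lower_ends N m \<inter> m ` lower_ends N m = {}"
    and "inj_on m (lower_ends N m)"
proof -
  show "{0..<N} = lower_ends N m \<union> m ` lower_ends N m"
  proof (intro equalityI subsetI)
    fix a assume "a \<in> {0..<N}"
    then have "a < N"
      by simp
    note pm = perfect_matchingD[OF assms this]
    show "a \<in> lower_ends N m \<union> m ` lower_ends N m"
    proof (cases "a < m a")
      case True
      then show ?thesis
        using \<open>a < N\<close> by (simp add: lower_ends_def)
    next
      case False
      then have "m a \<in> lower_ends N m"
        using pm by (simp add: lower_ends_def)
      then show ?thesis
        using pm(3) by (metis UnI2 image_eqI)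
    qed
  qed (auto simp: lower_ends_def dest: perfect_matchingD[OF assms])
  show "lower_ends N m \<inter> m ` lower_ends N m = {}"
    by (auto simp: lower_ends_def dest: perfect_matchingD[OF assms])
  show "inj_on m (lower_ends N m)"
    by (rule inj_onI) (metis lower_ends_def mem_Collect_eq perfect_matchingD(3)[OF assms])
qed

lemma matching_edges_eq_image:
  assumes "perfect_matching N m"
  shows "matching_edges N m = (\<lambda>a. (a, m a)) ` lower_ends N m"
  using assms unfolding matching_edges_def lower_ends_def pairs_def perfect_matching_def by auto

lemma lower_end_matching_edge:
  assumes "perfect_matching N m" and "a \<in> lower_ends N m"
  shows "(a, m a) \<in> matching_edges N m"
  using assms perfect_matchingD by (auto simp: lower_ends_def matching_edges_def pairs_def)

context comm_monoid_set
begin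

lemma perfect_matching_split:
  assumes "perfect_matching N m"
  shows "F g {0..<N} = F (\<lambda>a. g a \<^bold>* g (m a)) (lower_ends N m)"
proof -
  note part = perfect_matching_partition[OF assms]
  have "F g {0..<N} = F g (lower_ends N m) \<^bold>* F g (m ` lower_ends N m)"
    by (subst part(1), rule union_disjoint) (simp_all add: part(2) finite_lower_ends)
  also have "F g (m ` lower_ends N m) = F (\<lambda>a. g (m a)) (lower_ends N m)"
    using reindex[OF part(3)] by simp
  finally show ?thesis
    by (simp add: distrib)
qed

lemma matching_edges_reindex:
  assumes "perfect_matching N m"
  shows "F (\<lambda>(i, j). h i j) (matching_edges N m) = F (\<lambda>a. h a (m a)) (lower_ends N m)"
  unfolding matching_edges_eq_image[OF assms] by (subst reindex) (auto intro: inj_onI)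

end

section \<open>Matrices supported on a perfect matching\<close>

definition supported_on_matching :: "nat \<Rightarrow> (nat \<Rightarrow> nat) \<Rightarrow> 'a::zero mat \<Rightarrow> bool" where
  "supported_on_matching N m Z \<longleftrightarrow> (\<forall>r<N. \<forall>s<N. s \<noteq> r \<and> s \<noteq> m r \<longrightarrow> Z $$ (r, s) = 0)"

definition edge_block :: "(nat \<Rightarrow> nat) \<Rightarrow> 'a mat \<Rightarrow> nat \<Rightarrow> 'a mat" where
  "edge_block m Z a = mat 2 2 (\<lambda>(p, q). Z $$ (if p = 0 then a else m a, if q = 0 then a else m a))"

lemma edge_block_index [simp]:
  "edge_block m Z a $$ (0,0) = Z $$ (a, a)" "edge_block m Z a $$ (0,1) = Z $$ (a, m a)"
  "edge_block m Z a $$ (1,0) = Z $$ (m a, a)" "edge_block m Z a $$ (1,1) = Z $$ (m a, m a)"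
  by (simp_all add: edge_block_def)

lemma det_edge_block:
  fixes Z :: "'a::comm_ring_1 mat"
  shows "det (edge_block m Z a) = Z $$ (a, a) * Z $$ (m a, m a) - Z $$ (a, m a) * Z $$ (m a, a)"
  by (subst det_2) (simp_all add: edge_block_def)

lemma mult_mat_vec_supported_on_matching:
  fixes Z :: "'a::comm_ring mat"
  assumes pm: "perfect_matching N m" and Z: "Z \<in> carrier_mat N N"
    and supp: "supported_on_matching N m Z" and x: "x \<in> carrier_vec N" and r: "r < N"
  shows "(Z *\<^sub>v x) $ r = Z $$ (r, r) * x $ r + Z $$ (r, m r) * x $ m r"
proof -
  have "(Z *\<^sub>v x) $ r = (\<Sum>s\<in>{0..<N}. Z $$ (r, s) * x $ s)"
    using Z x r by (simp add: scalar_prod_def)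
  also have "\<dots> = (\<Sum>s\<in>{0..<N}. (if s = r then Z $$ (r, r) * x $ r else 0)
      + (if s = m r then Z $$ (r, m r) * x $ m r else 0))"
    using supp r perfect_matchingD(2)[OF pm r] unfolding supported_on_matching_def
    by (intro sum.cong) auto
  also have "\<dots> = Z $$ (r, r) * x $ r + Z $$ (r, m r) * x $ m r"
    using r perfect_matchingD(1)[OF pm r] by (simp add: sum.distrib)
  finally show ?thesis .
qed

lemma quadratic_form_supported_on_matching:
  fixes Z :: "'a::comm_ring mat"
  assumes pm: "perfect_matching N m" and Z: "Z \<in> carrier_mat N N"
    and supp: "supported_on_matching N m Z" and x: "x \<in> carrier_vec N"
  shows "x \<bullet> (Z *\<^sub>v x) = (\<Sum>a\<in>lower_ends N m. quad_form_2 (edge_block m Z a) (x $ a) (x $ m a))"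
proof -
  have "x \<bullet> (Z *\<^sub>v x) = (\<Sum>r\<in>{0..<N}. x $ r * (Z $$ (r, r) * x $ r + Z $$ (r, m r) * x $ m r))"
    using x Z mult_mat_vec_supported_on_matching[OF pm Z supp x] by (simp add: scalar_prod_def)
  also have "\<dots> = (\<Sum>a\<in>lower_ends N m. quad_form_2 (edge_block m Z a) (x $ a) (x $ m a))"
    by (subst sum.perfect_matching_split[OF pm], rule sum.cong)
      (auto simp: lower_ends_def quad_form_2_def edge_block_def perfect_matchingD[OF pm] algebra_simps)
  finally show ?thesis .
qed

(* Subtracting Z(r, m r) / Z(m r, m r) times row m r from each row r > m r is a unit lower
   triangular row operation that makes a matrix supported on the matching upper triangular;
   the diagonal entries in rows a and m a then multiply to the determinant of the block at a. *)
definition elimination_mat :: "nat \<Rightarrow> (nat \<Rightarrow> nat) \<Rightarrow> 'a::field mat \<Rightarrow> 'a mat" where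
  "elimination_mat N m Z = mat N N (\<lambda>(r, s). (if s = r then 1 else 0) -
     (if s = m r \<and> m r < r then Z $$ (r, m r) / Z $$ (m r, m r) else 0))"

lemma elimination_mat_carrier [simp]: "elimination_mat N m Z \<in> carrier_mat N N"
  by (simp add: elimination_mat_def)

lemma det_elimination_mat:
  assumes pm: "perfect_matching N m"
  shows "det (elimination_mat N m Z) = 1"
proof -
  have "det (elimination_mat N m Z) = prod_list (diag_mat (elimination_mat N m Z))"
    by (rule det_lower_triangular[OF _ elimination_mat_carrier]) (auto simp: elimination_mat_def)
  also have "\<dots> = 1"
    using perfect_matchingD(2)[OF pm]
    by (auto simp: prod_list_diag_prod elimination_mat_def intro!: prod.neutral)
  finally show ?thesis .
qed

lemma elimination_mat_mult_index:
  fixes Z :: "'a::field mat"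
  assumes pm: "perfect_matching N m" and Z: "Z \<in> carrier_mat N N" and "r < N" and "s < N"
  shows "(elimination_mat N m Z * Z) $$ (r, s) = Z $$ (r, s) -
    (if m r < r then Z $$ (r, m r) / Z $$ (m r, m r) * Z $$ (m r, s) else 0)"
proof -
  let ?c = "Z $$ (r, m r) / Z $$ (m r, m r)"
  have "(elimination_mat N m Z * Z) $$ (r, s) = (\<Sum>t\<in>{0..<N}. (if t = r then Z $$ (t, s) else 0)
      - (if t = m r \<and> m r < r then ?c * Z $$ (t, s) else 0))"
    using assms by (auto simp: scalar_prod_def elimination_mat_def algebra_simps intro!: sum.cong)
  then show ?thesis
    using assms perfect_matchingD(1)[OF pm] by (simp add: sum_subtractf)
qed

lemma upper_triangular_elimination_mat_mult:
  fixes Z :: "'a::field mat"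
  assumes pm: "perfect_matching N m" and Z: "Z \<in> carrier_mat N N"
    and supp: "supported_on_matching N m Z"
    and diag: "\<And>a. a \<in> lower_ends N m \<Longrightarrow> Z $$ (a, a) \<noteq> 0"
  shows "upper_triangular (elimination_mat N m Z * Z)"
proof (rule upper_triangularI)
  fix r s assume "s < r" and "r < dim_row (elimination_mat N m Z * Z)"
  then have rs: "r < N" "s < N"
    by (auto simp: elimination_mat_def)
  note LZ = elimination_mat_mult_index[OF pm Z rs]
  show "(elimination_mat N m Z * Z) $$ (r, s) = 0"
  proof (cases "s = m r")
    case True
    then have "m r \<in> lower_ends N m"
      using \<open>s < r\<close> rs perfect_matchingD[OF pm] by (simp add: lower_ends_def)
    then show ?thesis
      using LZ True \<open>s < r\<close> diag by simp
  next
    case False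
    then show ?thesis
      using LZ supp rs \<open>s < r\<close> perfect_matchingD[OF pm] unfolding supported_on_matching_def by auto
  qed
qed

lemma det_supported_on_matching:
  fixes Z :: "'a::field mat"
  assumes pm: "perfect_matching N m" and Z: "Z \<in> carrier_mat N N"
    and supp: "supported_on_matching N m Z"
    and diag: "\<And>a. a \<in> lower_ends N m \<Longrightarrow> Z $$ (a, a) \<noteq> 0"
  shows "det Z = (\<Prod>a\<in>lower_ends N m. det (edge_block m Z a))"
proof -
  let ?LZ = "elimination_mat N m Z * Z"
  have "det Z = det ?LZ"
    using det_mult[OF elimination_mat_carrier[of N m Z] Z] det_elimination_mat[OF pm, of Z] by simp
  also have "\<dots> = (\<Prod>r\<in>{0..<N}. ?LZ $$ (r, r))"
    using det_upper_triangular[OF upper_triangular_elimination_mat_mult[OF assms]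
        mult_carrier_mat[OF elimination_mat_carrier Z]]
    by (simp add: prod_list_diag_prod elimination_mat_def)
  also have "\<dots> = (\<Prod>a\<in>lower_ends N m. ?LZ $$ (a, a) * ?LZ $$ (m a, m a))"
    by (rule prod.perfect_matching_split[OF pm])
  also have "\<dots> = (\<Prod>a\<in>lower_ends N m. det (edge_block m Z a))"
  proof (rule prod.cong[OF refl])
    fix a assume a: "a \<in> lower_ends N m"
    then have "a < N" "a < m a" "m a < N" "m (m a) = a"
      using perfect_matchingD[OF pm] by (auto simp: lower_ends_def)
    with diag[OF a] show "?LZ $$ (a, a) * ?LZ $$ (m a, m a) = det (edge_block m Z a)"
      by (simp add: elimination_mat_mult_index[OF pm Z] det_edge_block field_simps)
  qed
  finally show ?thesis .
qed

lemma Psi_ij_index: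
  assumes "i \<noteq> j" and "i < N" and "j < N"
  shows "Psi_ij N i j X $$ (i, i) = X $$ (0,0)" and "Psi_ij N i j X $$ (i, j) = X $$ (0,1)"
    and "Psi_ij N i j X $$ (j, i) = X $$ (1,0)" and "Psi_ij N i j X $$ (j, j) = X $$ (1,1)"
  using assms by (simp_all add: Psi_ij_def)

lemma Psi_ij_index_outside:
  assumes "a < N" and "b < N" and "b \<noteq> i" and "b \<noteq> j"
  shows "Psi_ij N i j X $$ (a, b) = 0"
  using assms by (simp add: Psi_ij_def)

lemma Psi_ij_index_swap:
  assumes "i \<noteq> j" and "X $$ (1,0) = X $$ (0,1)" and "a < N" and "b < N"
  shows "Psi_ij N i j X $$ (b, a) = Psi_ij N i j X $$ (a, b)"
  using assms unfolding Psi_ij_def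
  by (cases "a = i"; cases "a = j"; cases "b = i"; cases "b = j") simp_all

definition matching_mat :: "nat \<Rightarrow> (nat \<Rightarrow> nat) \<Rightarrow> (nat \<Rightarrow> nat \<Rightarrow> real mat) \<Rightarrow> real mat" where
  "matching_mat N m M =
     mat N N (\<lambda>(a, b). \<Sum>(i, j)\<in>matching_edges N m. Psi_ij N i j (M i j) $$ (a, b))"

lemma matching_mat_carrier [simp]: "matching_mat N m M \<in> carrier_mat N N"
  by (simp add: matching_mat_def)

lemma matching_mat_row:
  assumes pm: "perfect_matching N m" and ij: "(i, j) \<in> matching_edges N m"
    and r: "r = i \<or> r = j" and s: "s < N"
  shows "matching_mat N m M $$ (r, s) = Psi_ij N i j (M i j) $$ (r, s)"
proof -
  let ?f = "\<lambda>(i', j'). Psi_ij N i' j' (M i' j') $$ (r, s)"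
  have ij': "i < j" "j < N" "m i = j" "m j = i"
    using ij perfect_matchingD(3)[OF pm] by (auto simp: matching_edges_def pairs_def)
  have "?f e = 0" if "e \<in> matching_edges N m - {(i, j)}" for e
  proof -
    obtain i' j' where e: "e = (i', j')"
      by (cases e)
    with that have "i' < j'" "j' < N" "m i' = j'" "(i', j') \<noteq> (i, j)"
      by (auto simp: matching_edges_def pairs_def)
    then have "r \<noteq> i'" "r \<noteq> j'"
      using ij' r perfect_matchingD(3)[OF pm, of i'] by auto
    moreover have "r < N"
      using r ij' by auto
    ultimately show ?thesis
      using e(1) s by (simp add: Psi_ij_def)
  qed
  then have "(\<Sum>e\<in>matching_edges N m. ?f e) = ?f (i, j)"
    using sum.remove[OF finite_matching_edges ij, of ?f] by simp
  then show ?thesis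
    using r ij' s by (auto simp: matching_mat_def)
qed

lemma matching_mat_symmetric:
  assumes "\<And>i j. (i, j) \<in> matching_edges N m \<Longrightarrow> pd_mat 2 (M i j)"
  shows "transpose_mat (matching_mat N m M) = matching_mat N m M"
proof (rule eq_matI)
  fix a b assume "a < dim_row (matching_mat N m M)" "b < dim_col (matching_mat N m M)"
  then have ab: "a < N" "b < N"
    by (simp_all add: matching_mat_def)
  have "Psi_ij N i j (M i j) $$ (b, a) = Psi_ij N i j (M i j) $$ (a, b)"
    if "(i, j) \<in> matching_edges N m" for i j
  proof (rule Psi_ij_index_swap[OF _ _ ab])
    show "i \<noteq> j"
      using that by (simp add: matching_edges_def pairs_def)
    show "M i j $$ (1,0) = M i j $$ (0,1)"
      using assms[OF that] by (rule pd_mat_2_symmetric)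
  qed
  then show "transpose_mat (matching_mat N m M) $$ (a, b) = matching_mat N m M $$ (a, b)"
    using ab by (simp add: matching_mat_def case_prod_beta')
qed (simp_all add: matching_mat_def)

lemma matching_mat_supported:
  assumes pm: "perfect_matching N m"
  shows "supported_on_matching N m (matching_mat N m M)"
  unfolding supported_on_matching_def
proof (intro allI impI)
  fix r s assume "r < N" "s < N" and s: "s \<noteq> r \<and> s \<noteq> m r"
  note pmD = perfect_matchingD[OF pm \<open>r < N\<close>]
  define e where "e = (if r < m r then (r, m r) else (m r, r))"
  have "e \<in> matching_edges N m"
    using \<open>r < N\<close> pmD by (auto simp: e_def matching_edges_def pairs_def)
  moreover have "r = fst e \<or> r = snd e"
    by (simp add: e_def)
  ultimately have "matching_mat N m M $$ (r, s) = Psi_ij N (fst e) (snd e) (M (fst e) (snd e)) $$ (r, s)"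
    using matching_mat_row[OF pm, of "fst e" "snd e" r s] \<open>s < N\<close> by simp
  moreover have "s \<noteq> fst e" and "s \<noteq> snd e"
    using s by (auto simp: e_def)
  ultimately show "matching_mat N m M $$ (r, s) = 0"
    using \<open>r < N\<close> \<open>s < N\<close> by (simp add: Psi_ij_index_outside)
qed

lemma edge_block_matching_mat:
  assumes pm: "perfect_matching N m"
    and blocks: "\<And>i j. (i, j) \<in> matching_edges N m \<Longrightarrow> pd_mat 2 (M i j)"
    and a: "a \<in> lower_ends N m"
  shows "edge_block m (matching_mat N m M) a = M a (m a)"
proof -
  have edge: "(a, m a) \<in> matching_edges N m"
    using pm a by (rule lower_end_matching_edge)
  then have M: "M a (m a) \<in> carrier_mat 2 2"
    using blocks by (simp add: pd_mat_def)
  have "a < N" "m a < N" "a \<noteq> m a"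
    using a perfect_matchingD[OF pm] by (auto simp: lower_ends_def)
  show ?thesis
  proof (rule eq_matI)
    fix p q assume "p < dim_row (M a (m a))" "q < dim_col (M a (m a))"
    then have "p < 2" "q < 2"
      using M by simp_all
    then show "edge_block m (matching_mat N m M) a $$ (p, q) = M a (m a) $$ (p, q)"
      using matching_mat_row[OF pm edge, of _ _ M] Psi_ij_index[OF \<open>a \<noteq> m a\<close> \<open>a < N\<close> \<open>m a < N\<close>]
        \<open>a < N\<close> \<open>m a < N\<close>
      by (auto simp: less_2_cases_iff edge_block_def)
  qed (use M in \<open>simp_all add: edge_block_def\<close>)
qed

lemma pd_mat_matching_mat:
  assumes pm: "perfect_matching N m"
    and blocks: "\<And>i j. (i, j) \<in> matching_edges N m \<Longrightarrow> pd_mat 2 (M i j)"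
  shows "pd_mat N (matching_mat N m M)"
proof -
  let ?Z = "matching_mat N m M"
  have pd_block: "pd_mat 2 (M a (m a))" if "a \<in> lower_ends N m" for a
    using blocks[OF lower_end_matching_edge[OF pm that]] .
  have block: "edge_block m ?Z a = M a (m a)" if "a \<in> lower_ends N m" for a
    using pm blocks that by (rule edge_block_matching_mat)
  have "x \<bullet> (?Z *\<^sub>v x) > 0" if x: "x \<in> carrier_vec N" "x \<noteq> 0\<^sub>v N" for x
  proof -
    obtain r where r: "r < N" "x $ r \<noteq> 0"
      using x by (metis carrier_vecD eq_vecI index_zero_vec)
    define a where "a = min r (m r)"
    have a: "a \<in> lower_ends N m" and "x $ a \<noteq> 0 \<or> x $ m a \<noteq> 0"
      using r perfect_matchingD[OF pm r(1)] by (auto simp: a_def lower_ends_def min_def)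
    then have "quad_form_2 (M a (m a)) (x $ a) (x $ m a) > 0"
      using pd_mat_2_quad_form_pos pd_block by blast
    moreover have "quad_form_2 (M b (m b)) (x $ b) (x $ m b) \<ge> 0" if "b \<in> lower_ends N m" for b
      using pd_mat_2_quad_form_nonneg pd_block[OF that] by blast
    ultimately have "(\<Sum>b\<in>lower_ends N m. quad_form_2 (M b (m b)) (x $ b) (x $ m b)) > 0"
      using a by (intro sum_pos2[OF finite_lower_ends]) auto
    then show ?thesis
      using quadratic_form_supported_on_matching[OF pm matching_mat_carrier matching_mat_supported[OF pm] x(1)]
      by (simp add: block)
  qed
  then show ?thesis
    using matching_mat_symmetric[OF blocks] by (auto simp: pd_mat_def)
qed

lemma det_matching_mat:
  assumes pm: "perfect_matching N m"
    and blocks: "\<And>i j. (i, j) \<in> matching_edges N m \<Longrightarrow> pd_mat 2 (M i j)"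
  shows "det (matching_mat N m M) = (\<Prod>(i, j)\<in>matching_edges N m. det (M i j))"
proof -
  let ?Z = "matching_mat N m M"
  have pd_block: "pd_mat 2 (M a (m a))" if "a \<in> lower_ends N m" for a
    using blocks[OF lower_end_matching_edge[OF pm that]] .
  have block: "edge_block m ?Z a = M a (m a)" if "a \<in> lower_ends N m" for a
    using pm blocks that by (rule edge_block_matching_mat)
  have "?Z $$ (a, a) \<noteq> 0" if "a \<in> lower_ends N m" for a
    using pd_mat_2_diag_pos(1)[OF pd_block[OF that]] edge_block_index(1)[of m ?Z a] block[OF that]
    by simp
  then have "det ?Z = (\<Prod>a\<in>lower_ends N m. det (M a (m a)))"
    using det_supported_on_matching[OF pm matching_mat_carrier matching_mat_supported[OF pm]]
    by (simp add: block)
  also have "\<dots> = (\<Prod>(i, j)\<in>matching_edges N m. det (M i j))"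
    by (rule prod.matching_edges_reindex[OF pm, symmetric])
  finally show ?thesis .
qed

lemma ln_det_matching_mat:
  assumes pm: "perfect_matching N m"
    and blocks: "\<And>i j. (i, j) \<in> matching_edges N m \<Longrightarrow> pd_mat 2 (M i j)"
  shows "ln (det (matching_mat N m M)) = (\<Sum>(i, j)\<in>matching_edges N m. ln (det (M i j)))"
proof -
  have "det (M (fst e) (snd e)) \<noteq> 0" if "e \<in> matching_edges N m" for e
    using pd_mat_2_det_pos[OF blocks[of "fst e" "snd e"]] that by simp
  then show ?thesis
    using det_matching_mat[OF pm blocks] by (simp add: ln_prod finite_matching_edges case_prod_beta')
qed

section \<open>The round-robin decomposition\<close>

lemma double_mod_inj:
  fixes n x y :: nat
  assumes "odd n" and "x < n" and "y < n" and "2 * x mod n = 2 * y mod n"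
  shows "x = y"
proof -
  have "[2 * x = 2 * y] (mod n)"
    using assms(4) by (simp add: cong_def)
  then have "[x = y] (mod n)"
    using assms(1) by (simp add: cong_mult_lcancel_nat)
  then show ?thesis
    using assms(2,3) by (rule cong_less_modulus_unique_nat)
qed

lemma double_half_mod:
  fixes n k :: nat
  assumes "odd n" and "k < n"
  shows "2 * (k * ((n + 1) div 2) mod n) mod n = k"
proof -
  have "2 * (k * ((n + 1) div 2)) = k * (2 * ((n + 1) div 2))"
    by (simp add: ac_simps)
  also have "\<dots> = k + k * n"
    using assms(1) by simp
  finally have double: "2 * (k * ((n + 1) div 2)) = k + k * n" .
  have "2 * (k * ((n + 1) div 2) mod n) mod n = 2 * (k * ((n + 1) div 2)) mod n"
    by (rule mod_mult_right_eq)
  also have "\<dots> = k"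
    unfolding double using assms(2) by simp
  finally show ?thesis .
qed

lemma add_mod_eq_iff:
  fixes n k r s :: nat
  assumes "r < n" and "k < n" and "s < n"
  shows "(r + s) mod n = k \<longleftrightarrow> s = (k + n - r) mod n"
proof -
  have "(r + s) mod n = k \<longleftrightarrow> [r + s = r + (k + n - r)] (mod n)"
    using assms by (simp add: cong_def)
  also have "\<dots> \<longleftrightarrow> [s = k + n - r] (mod n)"
    by (rule cong_add_lcancel_nat)
  also have "\<dots> \<longleftrightarrow> s = (k + n - r) mod n"
    using assms(3) by (simp add: cong_def)
  finally show ?thesis .
qed

(* Round k of the circle method for the players 0..n, n odd: the residues r and k - r mod n meet,
   and the one residue with 2 r = k mod n, namely k (n + 1) / 2 mod n, meets player n. *)
definition round_robin :: "nat \<Rightarrow> nat \<Rightarrow> nat \<Rightarrow> nat" where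
  "round_robin n k r =
     (if r = n then k * ((n + 1) div 2) mod n
      else if 2 * r mod n = k then n
      else (k + n - r) mod n)"

definition round_robin_round :: "nat \<Rightarrow> nat \<Rightarrow> nat \<Rightarrow> nat" where
  "round_robin_round n i j = (if j = n then 2 * i mod n else (i + j) mod n)"

lemma perfect_matching_round_robin:
  assumes n: "odd n" and k: "k < n"
  shows "perfect_matching (Suc n) (round_robin n k)"
  unfolding perfect_matching_def
proof (intro allI impI)
  fix a assume a: "a < Suc n"
  define h where "h = k * ((n + 1) div 2) mod n"
  have "0 < n"
    using n by (rule odd_pos)
  then have h: "h < n" "2 * h mod n = k"
    using double_half_mod[OF n k] by (simp_all add: h_def)
  consider "a = n" | "a < n" "2 * a mod n = k" | "a < n" "2 * a mod n \<noteq> k"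
    using a by linarith
  then show "round_robin n k a < Suc n \<and> round_robin n k a \<noteq> a \<and> round_robin n k (round_robin n k a) = a"
  proof cases
    case 1
    then show ?thesis
      using h by (simp add: round_robin_def h_def)
  next
    case 2
    then have "a = h"
      using double_mod_inj[OF n _ h(1)] h(2) by simp
    then show ?thesis
      using 2 by (simp add: round_robin_def h_def)
  next
    case 3
    define s where "s = (k + n - a) mod n"
    have s: "s < n"
      using \<open>0 < n\<close> by (simp add: s_def)
    have a_s: "(a + s) mod n = k"
      using add_mod_eq_iff[OF 3(1) k s] by (simp add: s_def)
    have "s \<noteq> a"
    proof
      assume "s = a"
      then have "2 * a mod n = k"
        using a_s by (simp add: mult_2)
      with 3(2) show False ..
    qed
    have "(s + a) mod n = k"
      using a_s by (simp add: add.commute[of s a])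
    then have a_eq: "a = (k + n - s) mod n"
      using add_mod_eq_iff[OF s k 3(1)] by blast
    have "2 * s mod n \<noteq> k"
    proof
      assume "2 * s mod n = k"
      then have "s = (k + n - s) mod n"
        using add_mod_eq_iff[OF s k s] by (simp add: mult_2)
      with a_eq \<open>s \<noteq> a\<close> show False
        by simp
    qed
    then have "round_robin n k s = a"
      using s a_eq by (simp add: round_robin_def)
    moreover have "round_robin n k a = s"
      using 3 by (simp add: round_robin_def s_def)
    ultimately show ?thesis
      using s \<open>s \<noteq> a\<close> by simp
  qed
qed

lemma round_robin_eq_iff:
  assumes n: "odd n" and k: "k < n" and ij: "i < j" "j \<le> n"
  shows "round_robin n k i = j \<longleftrightarrow> round_robin_round n i j = k"
proof -
  have "0 < n"
    using n by (rule odd_pos)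
  have i: "i < n"
    using ij by simp
  show ?thesis
  proof (cases "2 * i mod n = k")
    case True
    have "(i + j) mod n \<noteq> k" if "j < n"
      using True ij add_mod_eq_iff[OF i k that] add_mod_eq_iff[OF i k i] by (simp add: mult_2)
    then show ?thesis
      using True i ij by (auto simp: round_robin_def round_robin_round_def)
  next
    case False
    then have rr: "round_robin n k i = (k + n - i) mod n"
      using i by (simp add: round_robin_def)
    show ?thesis
    proof (cases "j = n")
      case True
      have "(k + n - i) mod n < n"
        using \<open>0 < n\<close> by simp
      then show ?thesis
        using True False rr by (simp add: round_robin_round_def)
    next
      case j_less: False
      then have "j < n"
        using ij by simp
      then show ?thesis
        using j_less rr add_mod_eq_iff[OF i k \<open>j < n\<close>] by (auto simp: round_robin_round_def)
    qed
  qed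
qed

lemma sum_pairs_by_round:
  assumes n: "odd n"
  shows "(\<Sum>k<n. \<Sum>e\<in>matching_edges (Suc n) (round_robin n k). g e) = (\<Sum>e\<in>pairs (Suc n). g e)"
proof -
  have "matching_edges (Suc n) (round_robin n k) = {e \<in> pairs (Suc n). case_prod (round_robin_round n) e = k}"
    if "k < n" for k
  proof (rule Set.set_eqI)
    fix e :: "nat \<times> nat"
    obtain i j where e: "e = (i, j)"
      by (cases e)
    show "e \<in> matching_edges (Suc n) (round_robin n k) \<longleftrightarrow>
        e \<in> {e \<in> pairs (Suc n). case_prod (round_robin_round n) e = k}"
    proof (cases "i < j \<and> j \<le> n")
      case True
      then show ?thesis
        using round_robin_eq_iff[OF n that, of i j] e by (auto simp: matching_edges_def pairs_def)
    qed (auto simp: e matching_edges_def pairs_def)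
  qed
  then have "(\<Sum>k<n. \<Sum>e\<in>matching_edges (Suc n) (round_robin n k). g e)
      = (\<Sum>k<n. \<Sum>e\<in>{e \<in> pairs (Suc n). case_prod (round_robin_round n) e = k}. g e)"
    by simp
  also have "\<dots> = (\<Sum>e\<in>pairs (Suc n). g e)"
  proof (rule sum.group[OF finite_pairs finite_lessThan])
    show "case_prod (round_robin_round n) ` pairs (Suc n) \<subseteq> {..<n}"
      using odd_pos[OF n] by (auto simp: round_robin_round_def)
  qed
  finally show ?thesis .
qed

lemma Psi_eq_sum_round_robin:
  assumes n: "odd n"
  shows "Psi (Suc n) M =
    mat (Suc n) (Suc n) (\<lambda>(a, b). \<Sum>k<n. matching_mat (Suc n) (round_robin n k) M $$ (a, b))"
proof (rule eq_matI)
  fix a b assume "a < dim_row (mat (Suc n) (Suc n)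
      (\<lambda>(a, b). \<Sum>k<n. matching_mat (Suc n) (round_robin n k) M $$ (a, b)))"
    and "b < dim_col (mat (Suc n) (Suc n)
      (\<lambda>(a, b). \<Sum>k<n. matching_mat (Suc n) (round_robin n k) M $$ (a, b)))"
  then have ab: "a < Suc n" "b < Suc n"
    by simp_all
  then show "Psi (Suc n) M $$ (a, b) = mat (Suc n) (Suc n)
      (\<lambda>(a, b). \<Sum>k<n. matching_mat (Suc n) (round_robin n k) M $$ (a, b)) $$ (a, b)"
    by (simp add: Psi_def matching_mat_def sum_pairs_by_round[OF n])
qed (simp_all add: Psi_def)

lemma phi_SDD_eq_sum_round_robin:
  assumes n: "odd n" and pd: "\<And>i j. (i, j) \<in> pairs (Suc n) \<Longrightarrow> pd_mat 2 (M i j)"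
  shows "phi_SDD (Suc n) M = (\<Sum>k<n. ln (det (matching_mat (Suc n) (round_robin n k) M)))"
proof -
  have "phi_SDD (Suc n) M = (\<Sum>(i, j)\<in>pairs (Suc n). ln (det (M i j)))"
    using pd by (auto simp: phi_SDD_def pd_mat_2_det intro!: sum.cong)
  also have "\<dots> = (\<Sum>k<n. \<Sum>(i, j)\<in>matching_edges (Suc n) (round_robin n k). ln (det (M i j)))"
    by (rule sum_pairs_by_round[OF n, symmetric])
  also have "\<dots> = (\<Sum>k<n. ln (det (matching_mat (Suc n) (round_robin n k) M)))"
    using perfect_matching_round_robin[OF n] pd
    by (intro sum.cong refl ln_det_matching_mat[symmetric]) (auto simp: matching_edges_def)
  finally show ?thesis .
qed

theorem lemmaA1:
  fixes N :: nat and M :: "nat \<Rightarrow> nat \<Rightarrow> real mat"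
  assumes "N \<ge> 2" and "even N"
    and sym: "\<And>i j. (i, j) \<in> pairs N \<Longrightarrow> M i j \<in> carrier_mat 2 2 \<and> transpose_mat (M i j) = M i j"
    and "Psi N M \<in> SDD N"
    and fin: "\<And>i j. (i, j) \<in> pairs N \<Longrightarrow> pd_mat 2 (M i j)"
  shows "\<exists>Z :: nat \<Rightarrow> real mat. (\<forall>k \<in> {1..N-1}. pd_mat N (Z k)) \<and>
           Psi N M = mat N N (\<lambda>(a, b). \<Sum>k = 1..N-1. Z k $$ (a, b)) \<and>
           phi_SDD N M = (\<Sum>k = 1..N-1. ln (det (Z k)))"
proof -
  define n where "n = N - 1"
  have N: "N = Suc n" and n: "odd n"
    using assms(1,2) by (simp_all add: n_def)
  define Z where "Z k = matching_mat N (round_robin n (k - 1)) M" for k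
  have "pd_mat N (Z k)" if "k \<in> {1..N-1}" for k
  proof -
    have "k - 1 < n"
      using that by (auto simp: n_def)
    then have "perfect_matching N (round_robin n (k - 1))"
      unfolding N by (rule perfect_matching_round_robin[OF n])
    moreover have "pd_mat 2 (M i j)" if "(i, j) \<in> matching_edges N m" for i j m
      using fin that by (simp add: matching_edges_def)
    ultimately show ?thesis
      unfolding Z_def by (rule pd_mat_matching_mat)
  qed
  moreover have "Psi N M = mat N N (\<lambda>(a, b). \<Sum>k = 1..N-1. Z k $$ (a, b))"
    using Psi_eq_sum_round_robin[OF n, of M] by (simp add: N Z_def sum.atLeast1_atMost_eq)
  moreover have "phi_SDD N M = (\<Sum>k = 1..N-1. ln (det (Z k)))"
    using phi_SDD_eq_sum_round_robin[OF n, of M] fin by (simp add: N Z_def sum.atLeast1_atMost_eq)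
  ultimately show ?thesis
    by blast
qed

end
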